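(* Let $T=(A,B,C)$ be a nondegenerate, counterclockwise triangle all of whose angles are less than $120^\circ$, so that its flank triangles $F_a,F_b,F_c$ are nondegenerate and counterclockwise. Then the second isodynamic points of $F_a$, $F_b$, $F_c$ all coincide with the second isodynamic point $X_{16}$ of $T$.
   Context: Identify the Euclidean plane with $\mathbb{C}$ and put $\rho=e^{2\pi i/3}$. Let $T=(A,B,C)$ be a nondegenerate triangle whose vertices are listed counterclockwise. On each side of $T$ erect outwardly a regular hexagon, i.e. the regular hexagon having that side as an edge and lying on the opposite side of that side's line from the third vertex. The flank triangles of $T$ are: $F_a$ with vertices $A,\ A+\rho(C-A),\ A+\rho^{-1}(B-A)$; $F_b$ with vertices $B,\ B+\rho(A-B),\ B+\rho^{-1}(C-B)$; $F_c$ with vertices $C,\ C+\rho(B-C),\ C+\rho^{-1}(A-C)$. For example, $A+\rho(C-A)$ and $A+\rho^{-1}(B-A)$ are the vertices adjacent to $A$, other than $C$ resp. $B$, of the hexagons erected on $AC$ resp. $AB$. The angle of $F_a$ at $A$ equals $120^\circ-\angle A$, and similarly for $F_b$ and $F_c$. For a nondegenerate triangle with vertices $V_1,V_2,V_3$, let $\ell_i$ be the length of the side opposite $V_i$ and $\theta_i$ the angle at $V_i$. The second isodynamic point $X_{16}$ is the point with homogeneous barycentric coordinates $(\ell_1\sin(\theta_1-\pi/3):\ell_2\sin(\theta_2-\pi/3):\ell_3\sin(\theta_3-\pi/3))$. *)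

theory Defs
  imports "HOL-Analysis.Analysis"
begin

definition rho :: complex where
  "rho = cis (2 * pi / 3)"

definition ccw :: "complex \<Rightarrow> complex \<Rightarrow> complex \<Rightarrow> bool" where
  "ccw A B C \<longleftrightarrow> Im (cnj (B - A) * (C - A)) > 0"

definition vang :: "complex \<Rightarrow> complex \<Rightarrow> real" where
  "vang u v = arccos (Re (u * cnj v) / (cmod u * cmod v))"

definition tri_angle :: "complex \<Rightarrow> complex \<Rightarrow> complex \<Rightarrow> real" where
  "tri_angle V1 V2 V3 = vang (V2 - V1) (V3 - V1)"

definition flank_a :: "complex \<Rightarrow> complex \<Rightarrow> complex \<Rightarrow> complex \<times> complex \<times> complex" where
  "flank_a A B C = (A, A + rho * (C - A), A + inverse rho * (B - A))"
definition flank_b :: "complex \<Rightarrow> complex \<Rightarrow> complex \<Rightarrow> complex \<times> complex \<times> complex" where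
  "flank_b A B C = (B, B + rho * (A - B), B + inverse rho * (C - B))"
definition flank_c :: "complex \<Rightarrow> complex \<Rightarrow> complex \<Rightarrow> complex \<times> complex \<times> complex" where
  "flank_c A B C = (C, C + rho * (B - C), C + inverse rho * (A - C))"

text \<open>Point with homogeneous barycentric coordinates (w1:w2:w3) w.r.t. V1 V2 V3;
  None if the point is at infinity (w1+w2+w3 = 0).\<close>
definition bary :: "complex \<Rightarrow> complex \<Rightarrow> complex \<Rightarrow> real \<Rightarrow> real \<Rightarrow> real \<Rightarrow> complex option" where
  "bary V1 V2 V3 w1 w2 w3 =
     (if w1 + w2 + w3 = 0 then None
      else Some ((of_real w1 * V1 + of_real w2 * V2 + of_real w3 * V3) / of_real (w1 + w2 + w3)))"

definition X16 :: "complex \<times> complex \<times> complex \<Rightarrow> complex option" where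
  "X16 T = (case T of (V1, V2, V3) \<Rightarrow>
     bary V1 V2 V3
       (cmod (V2 - V3) * sin (tri_angle V1 V2 V3 - pi / 3))
       (cmod (V3 - V1) * sin (tri_angle V2 V3 V1 - pi / 3))
       (cmod (V1 - V2) * sin (tri_angle V3 V1 V2 - pi / 3)))"

end

theory Submission
  imports Defs
begin

text \<open>
  For a counterclockwise triangle with angle \<open>\<theta>\<^sub>i\<close> at \<open>V\<^sub>i\<close>, the barycentric coordinate
  \<open>\<ell>\<^sub>i sin (\<theta>\<^sub>i - \<pi>/3)\<close> of \<open>X\<^sub>1\<^sub>6\<close> is, up to the common factor \<open>1/(2 \<ell>\<^sub>1 \<ell>\<^sub>2 \<ell>\<^sub>3)\<close>, the
  polynomial \<open>\<ell>\<^sub>i\<^sup>2 (\<Delta> - \<surd>3 \<langle>V\<^sub>j - V\<^sub>i, V\<^sub>k - V\<^sub>i\<rangle>)\<close>, where \<open>\<Delta>\<close> is twice the signed area.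
  So \<open>X\<^sub>1\<^sub>6 - V\<^sub>1\<close> is an explicit rational expression in the edge vectors \<open>u, v\<close> at \<open>V\<^sub>1\<close>.
  The flank triangle \<open>F\<^sub>a\<close> has edge vectors \<open>\<rho> v, \<rho>\<^sup>-\<^sup>1 u\<close> at \<open>A\<close>; writing these in the basis
  \<open>u, v\<close> by Cramer's rule turns \<open>X\<^sub>1\<^sub>6(F\<^sub>a) = X\<^sub>1\<^sub>6(T)\<close> into two polynomial identities, which hold
  modulo Lagrange's identity \<open>|u|\<^sup>2 |v|\<^sup>2 = \<langle>u, v\<rangle>\<^sup>2 + \<Delta>\<^sup>2\<close>. The angle condition is exactly what
  makes \<open>F\<^sub>a\<close> counterclockwise: its doubled area is \<open>|u| |v| sin (\<angle>A + \<pi>/3)\<close>.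
  The flanks \<open>F\<^sub>b, F\<^sub>c\<close> are \<open>F\<^sub>a\<close> of the relabelled triangles \<open>(B, C, A)\<close>, \<open>(C, A, B)\<close>.
\<close>

definition area2 :: "complex \<Rightarrow> complex \<Rightarrow> complex \<Rightarrow> real" where
  "area2 V1 V2 V3 = Im (cnj (V2 - V1) * (V3 - V1))"

definition x16_weight :: "complex \<Rightarrow> complex \<Rightarrow> complex \<Rightarrow> real" where
  "x16_weight V1 V2 V3 =
     (cmod (V2 - V3))\<^sup>2 * (area2 V1 V2 V3 - sqrt 3 * Re (cnj (V2 - V1) * (V3 - V1)))"

text \<open>Nonnegative by Weitzenboeck's inequality; for a counterclockwise triangle it vanishes
  exactly when \<open>X\<^sub>1\<^sub>6\<close> is at infinity.\<close>
definition weitzenboeck_gap :: "complex \<Rightarrow> complex \<Rightarrow> complex \<Rightarrow> real" where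
  "weitzenboeck_gap V1 V2 V3 =
     (cmod (V2 - V3))\<^sup>2 + (cmod (V3 - V1))\<^sup>2 + (cmod (V1 - V2))\<^sup>2 - 2 * sqrt 3 * area2 V1 V2 V3"

definition x16_offset :: "complex \<Rightarrow> complex \<Rightarrow> complex \<Rightarrow> complex" where
  "x16_offset V1 V2 V3 =
     (of_real (x16_weight V2 V3 V1) * (V2 - V1) + of_real (x16_weight V3 V1 V2) * (V3 - V1))
     / of_real (area2 V1 V2 V3)"

lemma ccw_iff_area2_pos: "ccw V1 V2 V3 \<longleftrightarrow> area2 V1 V2 V3 > 0"
  by (simp add: ccw_def area2_def)

lemma area2_rotate: "area2 V2 V3 V1 = area2 V1 V2 V3"
  by (simp add: area2_def algebra_simps)

lemma ccw_rotate: "ccw V1 V2 V3 \<Longrightarrow> ccw V2 V3 V1"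
  by (simp add: ccw_iff_area2_pos area2_rotate)

lemma area2_eq_origin: "area2 V1 V2 V3 = area2 0 (V2 - V1) (V3 - V1)"
  by (simp add: area2_def)

lemma weitzenboeck_gap_eq_origin:
  "weitzenboeck_gap V1 V2 V3 = weitzenboeck_gap 0 (V2 - V1) (V3 - V1)"
  by (simp add: weitzenboeck_gap_def area2_def norm_minus_commute)

lemma x16_offset_eq_origin: "x16_offset V1 V2 V3 = x16_offset 0 (V2 - V1) (V3 - V1)"
  by (simp add: x16_offset_def x16_weight_def area2_def algebra_simps)

lemma tri_angle_eq_origin: "tri_angle V1 V2 V3 = tri_angle 0 (V2 - V1) (V3 - V1)"
  by (simp add: tri_angle_def)

lemma lagrange_identity:
  "(cmod u)\<^sup>2 * (cmod v)\<^sup>2 = (Re (cnj u * v))\<^sup>2 + (Im (cnj u * v))\<^sup>2"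
  using cmod_power2[of "cnj u * v"] by (simp only: norm_mult complex_mod_cnj power_mult_distrib)

lemma tri_angle_polar:
  assumes pos: "area2 V1 V2 V3 > 0"
  defines "m \<equiv> cmod (V2 - V1) * cmod (V3 - V1)"
  shows "Re (cnj (V2 - V1) * (V3 - V1)) = m * cos (tri_angle V1 V2 V3)"
    and "area2 V1 V2 V3 = m * sin (tri_angle V1 V2 V3)"
    and "0 \<le> tri_angle V1 V2 V3"
proof -
  define u where "u = V2 - V1"
  define v where "v = V3 - V1"
  define R where "R = Re (cnj u * v)"
  define D where "D = area2 V1 V2 V3"
  have m: "m = cmod u * cmod v"
    by (simp add: m_def u_def v_def)
  have "u \<noteq> 0" "v \<noteq> 0"
    using pos by (auto simp: area2_def u_def v_def)
  then have m_pos: "m > 0"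
    by (simp add: m)
  have pythagoras: "D\<^sup>2 + R\<^sup>2 = m\<^sup>2"
    using lagrange_identity[of u v]
    by (simp add: m power_mult_distrib D_def R_def area2_def u_def v_def)
  define x where "x = R / m"
  have "R\<^sup>2 \<le> m\<^sup>2"
    using pythagoras zero_le_power2[of D] by linarith
  then have "\<bar>R\<bar> \<le> \<bar>m\<bar>"
    by (simp add: abs_le_square_iff)
  then have x_bound: "\<bar>x\<bar> \<le> 1"
    using m_pos by (simp add: x_def abs_divide divide_le_eq)
  have angle: "tri_angle V1 V2 V3 = arccos x"
    by (simp add: tri_angle_def vang_def x_def R_def m u_def v_def algebra_simps)
  show "Re (cnj (V2 - V1) * (V3 - V1)) = m * cos (tri_angle V1 V2 V3)"
    using m_pos x_bound by (simp add: angle cos_arccos_abs x_def R_def u_def v_def)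
  have "1 - x\<^sup>2 = (D / m)\<^sup>2"
    using pythagoras m_pos by (simp add: x_def power_divide field_simps)
  then have "sin (tri_angle V1 V2 V3) = D / m"
    using x_bound pos m_pos by (simp add: angle sin_arccos_abs D_def)
  then show "area2 V1 V2 V3 = m * sin (tri_angle V1 V2 V3)"
    using m_pos by (simp add: D_def)
  show "0 \<le> tri_angle V1 V2 V3"
    using x_bound by (simp add: angle arccos_lbound)
qed

lemma x16_weight_eq_sin:
  assumes "area2 V1 V2 V3 > 0"
  shows "x16_weight V1 V2 V3 = 2 * (cmod (V2 - V3))\<^sup>2 * cmod (V2 - V1) * cmod (V3 - V1)
           * sin (tri_angle V1 V2 V3 - pi / 3)"
  unfolding x16_weight_def tri_angle_polar(1,2)[OF assms] sin_diff sin_60 cos_60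
  by (simp add: algebra_simps)

lemma bary_scale:
  assumes "k \<noteq> 0"
  shows "bary V1 V2 V3 (k * w1) (k * w2) (k * w3) = bary V1 V2 V3 w1 w2 w3"
proof -
  have sum: "k * w1 + k * w2 + k * w3 = k * (w1 + w2 + w3)"
    by (simp add: algebra_simps)
  have "of_real (k * w1) * V1 + of_real (k * w2) * V2 + of_real (k * w3) * V3
      = of_real k * (of_real w1 * V1 + of_real w2 * V2 + of_real w3 * V3)"
    by (simp add: algebra_simps)
  with assms show ?thesis
    unfolding bary_def sum by simp
qed

lemma bary_rotate: "bary V2 V3 V1 w2 w3 w1 = bary V1 V2 V3 w1 w2 w3"
  by (simp add: bary_def ac_simps)

lemma bary_eq_offset:
  "bary V1 V2 V3 w1 w2 w3 = (if w1 + w2 + w3 = 0 then None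
     else Some (V1 + (of_real w2 * (V2 - V1) + of_real w3 * (V3 - V1)) / of_real (w1 + w2 + w3)))"
proof (cases "w1 + w2 + w3 = 0")
  case False
  then have "complex_of_real (w1 + w2 + w3) \<noteq> 0"
    by (metis of_real_eq_0_iff)
  then have "(of_real w1 * V1 + of_real w2 * V2 + of_real w3 * V3) / of_real (w1 + w2 + w3)
      = V1 + (of_real w2 * (V2 - V1) + of_real w3 * (V3 - V1)) / of_real (w1 + w2 + w3)"
    by (simp add: field_simps)
  with False show ?thesis
    by (simp add: bary_def)
qed (simp add: bary_def)

lemma X16_eq_bary_weights:
  assumes "ccw V1 V2 V3"
  shows "X16 (V1, V2, V3) =
           bary V1 V2 V3 (x16_weight V1 V2 V3) (x16_weight V2 V3 V1) (x16_weight V3 V1 V2)"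
proof -
  have pos: "area2 V1 V2 V3 > 0" "area2 V2 V3 V1 > 0" "area2 V3 V1 V2 > 0"
    using assms by (simp_all add: ccw_iff_area2_pos area2_rotate)
  define k where "k = 1 / (2 * cmod (V2 - V3) * cmod (V3 - V1) * cmod (V1 - V2))"
  have "V1 \<noteq> V2" "V2 \<noteq> V3" "V3 \<noteq> V1"
    using pos(1) by (auto simp: area2_def algebra_simps)
  then have "k \<noteq> 0"
    by (simp add: k_def)
  have coord: "cmod (V2 - V3) * sin (tri_angle V1 V2 V3 - pi / 3) = k * x16_weight V1 V2 V3"
    "cmod (V3 - V1) * sin (tri_angle V2 V3 V1 - pi / 3) = k * x16_weight V2 V3 V1"
    "cmod (V1 - V2) * sin (tri_angle V3 V1 V2 - pi / 3) = k * x16_weight V3 V1 V2"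
    using \<open>V1 \<noteq> V2\<close> \<open>V2 \<noteq> V3\<close> \<open>V3 \<noteq> V1\<close>
    by (simp_all add: x16_weight_eq_sin pos k_def norm_minus_commute power2_eq_square)
  show ?thesis
    by (simp add: X16_def coord bary_scale[OF \<open>k \<noteq> 0\<close>])
qed

lemma X16_rotate:
  assumes "ccw V1 V2 V3"
  shows "X16 (V2, V3, V1) = X16 (V1, V2, V3)"
  using assms by (simp add: X16_eq_bary_weights ccw_rotate bary_rotate)

lemma x16_weight_sum:
  "x16_weight V1 V2 V3 + x16_weight V2 V3 V1 + x16_weight V3 V1 V2
     = area2 V1 V2 V3 * weitzenboeck_gap V1 V2 V3"
  unfolding x16_weight_def weitzenboeck_gap_def area2_def cmod_power2
  by (simp add: algebra_simps power2_eq_square)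

lemma X16_eq_offset:
  assumes "ccw V1 V2 V3"
  shows "X16 (V1, V2, V3) = (if weitzenboeck_gap V1 V2 V3 = 0 then None
           else Some (V1 + x16_offset V1 V2 V3 / of_real (weitzenboeck_gap V1 V2 V3)))"
  using assms
  by (simp add: X16_eq_bary_weights bary_eq_offset x16_weight_sum x16_offset_def
      ccw_iff_area2_pos)

lemma rho_components: "Re rho = -1/2" "Im rho = sqrt 3 / 2"
proof -
  have "sin (2 * pi / 3) = sqrt 3 / 2"
    using sin_120' by (simp add: mult.commute)
  then show "Re rho = -1/2" "Im rho = sqrt 3 / 2"
    by (simp_all add: rho_def cos_120)
qed

lemma norm_rho [simp]: "cmod rho = 1"
  by (simp add: rho_def)

lemma inverse_rho: "inverse rho = cnj rho"
  by (simp add: rho_def cis_cnj)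

lemma sqrt3_mult_sqrt3: "sqrt 3 * (sqrt 3 * x) = 3 * x"
  by (simp flip: mult.assoc)

lemma cramer_area2:
  "of_real (area2 0 u v) * z = of_real (Im (cnj u * z)) * v - of_real (Im (cnj v * z)) * u"
  by (simp add: area2_def complex_eq_iff algebra_simps)

lemma norm_diff_square: "(cmod (x - y))\<^sup>2 = (cmod x)\<^sup>2 + (cmod y)\<^sup>2 - 2 * Re (cnj x * y)"
  unfolding cmod_power2 by (simp add: power2_eq_square algebra_simps)

lemma x16_offset_origin:
  "x16_offset 0 u v =
     (of_real ((cmod v)\<^sup>2 * (area2 0 u v - sqrt 3 * ((cmod u)\<^sup>2 - Re (cnj u * v)))) * u
      + of_real ((cmod u)\<^sup>2 * (area2 0 u v - sqrt 3 * ((cmod v)\<^sup>2 - Re (cnj u * v)))) * v)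
     / of_real (area2 0 u v)"
proof -
  have "area2 u v 0 = area2 0 u v" "area2 v 0 u = area2 0 u v"
    by (simp_all add: area2_def algebra_simps)
  moreover have "Re (cnj (v - u) * (0 - u)) = (cmod u)\<^sup>2 - Re (cnj u * v)"
      "Re (cnj (0 - v) * (u - v)) = (cmod v)\<^sup>2 - Re (cnj u * v)"
    unfolding cmod_power2 by (simp_all add: power2_eq_square algebra_simps)
  ultimately show ?thesis
    by (simp add: x16_offset_def x16_weight_def)
qed

lemma area2_flank_origin:
  "area2 0 (rho * v) (inverse rho * u) = (area2 0 u v + sqrt 3 * Re (cnj u * v)) / 2"
  by (simp add: area2_def inverse_rho rho_components algebra_simps sqrt3_mult_sqrt3)

lemma dot_flank_origin:
  "Re (cnj (rho * v) * (inverse rho * u)) = (sqrt 3 * area2 0 u v - Re (cnj u * v)) / 2"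
  by (simp add: area2_def inverse_rho rho_components algebra_simps sqrt3_mult_sqrt3)

lemma weitzenboeck_gap_flank_origin:
  "weitzenboeck_gap 0 (rho * v) (inverse rho * u) = weitzenboeck_gap 0 u v"
  unfolding weitzenboeck_gap_def norm_diff_square area2_flank_origin dot_flank_origin
  by (simp add: norm_mult norm_divide field_simps sqrt3_mult_sqrt3)

text \<open>The coefficients of \<open>u\<close> and \<open>v\<close> in the flank identity, with \<open>s = \<surd>3\<close>,
  \<open>a = |u|\<^sup>2\<close>, \<open>b = |v|\<^sup>2\<close>, \<open>R = \<langle>u, v\<rangle>\<close>; \<open>D'\<close> and \<open>R'\<close> are \<open>\<Delta>\<close> and \<open>\<langle>\<cdot>, \<cdot>\<rangle>\<close> for the flank.\<close>
lemma flank_weight_identities: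
  fixes a b R D s :: real
  assumes s: "s * s = 3" and lagrange: "a * b = R\<^sup>2 + D\<^sup>2"
  defines "D' \<equiv> (D + s * R) / 2" and "R' \<equiv> (s * D - R) / 2"
  shows "a * (D' - s * (b - R')) * (s * b / 2) + b * (D' - s * (a - R')) * ((D - s * R) / 2)
           = - (b * (D - s * (a - R)) * D')"
    and "a * (D' - s * (b - R')) * ((s * R - D) / 2) - b * (D' - s * (a - R')) * (s * a / 2)
           = a * (D - s * (b - R)) * D'"
proof -
  have ss: "s * (s * x) = 3 * x" for x
    using s by (metis mult.assoc)
  have "a * (D' - s * (b - R')) * (s * b / 2) + b * (D' - s * (a - R')) * ((D - s * R) / 2)
      + b * (D - s * (a - R)) * D' = 3 / 2 * b * (R\<^sup>2 + D\<^sup>2 - a * b)"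
    "a * (D' - s * (b - R')) * ((s * R - D) / 2) - b * (D' - s * (a - R')) * (s * a / 2)
      - a * (D - s * (b - R)) * D' = 3 / 2 * a * (a * b - R\<^sup>2 - D\<^sup>2)"
    unfolding D'_def R'_def by (simp_all add: field_simps power2_eq_square s ss)
  with lagrange show
    "a * (D' - s * (b - R')) * (s * b / 2) + b * (D' - s * (a - R')) * ((D - s * R) / 2)
      = - (b * (D - s * (a - R)) * D')"
    "a * (D' - s * (b - R')) * ((s * R - D) / 2) - b * (D' - s * (a - R')) * (s * a / 2)
      = a * (D - s * (b - R)) * D'"
    by simp_all
qed

lemma x16_offset_flank_origin:
  assumes "area2 0 u v \<noteq> 0" "area2 0 (rho * v) (inverse rho * u) \<noteq> 0"
  shows "x16_offset 0 (rho * v) (inverse rho * u) = x16_offset 0 u v"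
proof -
  define a b R D where "a = (cmod u)\<^sup>2" and "b = (cmod v)\<^sup>2"
    and "R = Re (cnj u * v)" and "D = area2 0 u v"
  define D' R' where "D' = (D + sqrt 3 * R) / 2" and "R' = (sqrt 3 * D - R) / 2"
  define W2 W3 where "W2 = b * (D - sqrt 3 * (a - R))" and "W3 = a * (D - sqrt 3 * (b - R))"
  define W2' W3' where "W2' = a * (D' - sqrt 3 * (b - R'))" and "W3' = b * (D' - sqrt 3 * (a - R'))"
  have offset: "x16_offset 0 u v = (of_real W2 * u + of_real W3 * v) / of_real D"
    by (simp add: x16_offset_origin W2_def W3_def a_def b_def R_def D_def)
  have offset': "x16_offset 0 (rho * v) (inverse rho * u)
      = (of_real W2' * (rho * v) + of_real W3' * (inverse rho * u)) / of_real D'"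
    unfolding x16_offset_origin area2_flank_origin dot_flank_origin
    by (simp add: norm_mult inverse_rho W2'_def W3'_def a_def b_def R_def D_def D'_def R'_def)
  have "Im (cnj u * (rho * v)) = (sqrt 3 * R - D) / 2" "Im (cnj v * (rho * v)) = sqrt 3 * b / 2"
      "Im (cnj u * (inverse rho * u)) = - sqrt 3 * a / 2"
      "Im (cnj v * (inverse rho * u)) = (D - sqrt 3 * R) / 2"
    unfolding a_def b_def cmod_power2
    by (simp_all add: R_def D_def area2_def inverse_rho rho_components power2_eq_square
        algebra_simps)
  then have rho_v: "of_real D * (rho * v)
      = of_real ((sqrt 3 * R - D) / 2) * v - of_real (sqrt 3 * b / 2) * u"
    and rho_u: "of_real D * (inverse rho * u)
      = of_real (- sqrt 3 * a / 2) * v - of_real ((D - sqrt 3 * R) / 2) * u"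
    by (simp_all only: D_def cramer_area2)
  have "a * b = R\<^sup>2 + D\<^sup>2"
    by (simp add: a_def b_def R_def D_def area2_def lagrange_identity)
  from flank_weight_identities[OF _ this, of "sqrt 3"]
  have coeff_u: "W2' * (sqrt 3 * b / 2) + W3' * ((D - sqrt 3 * R) / 2) = - (W2 * D')"
    and coeff_v: "W2' * ((sqrt 3 * R - D) / 2) - W3' * (sqrt 3 * a / 2) = W3 * D'"
    by (simp_all add: W2_def W3_def W2'_def W3'_def D'_def R'_def)
  have "of_real D * (of_real W2' * (rho * v) + of_real W3' * (inverse rho * u))
      = of_real W2' * (of_real D * (rho * v)) + of_real W3' * (of_real D * (inverse rho * u))"
    by (simp add: algebra_simps)
  also have "\<dots> = of_real (W2' * ((sqrt 3 * R - D) / 2) - W3' * (sqrt 3 * a / 2)) * v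
      - of_real (W2' * (sqrt 3 * b / 2) + W3' * ((D - sqrt 3 * R) / 2)) * u"
    unfolding rho_v rho_u by (simp add: algebra_simps)
  also have "\<dots> = of_real D' * (of_real W2 * u + of_real W3 * v)"
    unfolding coeff_u coeff_v by (simp add: algebra_simps)
  finally have "of_real D * (of_real W2' * (rho * v) + of_real W3' * (inverse rho * u))
      = of_real D' * (of_real W2 * u + of_real W3 * v)" .
  moreover have "D \<noteq> 0" "D' \<noteq> 0"
    using assms by (simp_all add: D_def D'_def R_def area2_flank_origin)
  ultimately show ?thesis
    unfolding offset offset' by (simp add: field_simps)
qed

lemma area2_flank_a_pos:
  assumes "ccw A B C" "tri_angle A B C < 2 * pi / 3"
  shows "area2 A (A + rho * (C - A)) (A + inverse rho * (B - A)) > 0"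
proof -
  define u where "u = B - A"
  define v where "v = C - A"
  have pos: "area2 0 u v > 0" and angle: "tri_angle 0 u v < 2 * pi / 3"
    using assms area2_eq_origin[of A B C] tri_angle_eq_origin[of A B C]
    by (simp_all add: ccw_iff_area2_pos u_def v_def)
  have "u \<noteq> 0" "v \<noteq> 0"
    using pos by (auto simp: area2_def)
  have "area2 0 (rho * v) (inverse rho * u) = (area2 0 u v + sqrt 3 * Re (cnj u * v)) / 2"
    by (rule area2_flank_origin)
  also have "\<dots> = cmod u * cmod v * sin (tri_angle 0 u v + pi / 3)"
    using tri_angle_polar[OF pos] by (simp add: sin_add sin_60 cos_60 algebra_simps)
  moreover have "sin (tri_angle 0 u v + pi / 3) > 0"
    using tri_angle_polar(3)[OF pos] angle by (intro sin_gt_zero) auto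
  ultimately show ?thesis
    using \<open>u \<noteq> 0\<close> \<open>v \<noteq> 0\<close> area2_eq_origin[of A "A + rho * (C - A)"]
    by (simp add: u_def v_def)
qed

lemma X16_flank_a:
  assumes "ccw A B C" "tri_angle A B C < 2 * pi / 3"
  shows "X16 (flank_a A B C) = X16 (A, B, C)"
proof -
  define u where "u = B - A"
  define v where "v = C - A"
  define F2 where "F2 = A + rho * v"
  define F3 where "F3 = A + inverse rho * u"
  have ccw_flank: "ccw A F2 F3"
    using area2_flank_a_pos[OF assms] by (simp add: ccw_iff_area2_pos F2_def F3_def u_def v_def)
  have "area2 0 (rho * v) (inverse rho * u) > 0" "area2 0 u v > 0"
    using ccw_flank assms(1) area2_eq_origin[of A F2 F3] area2_eq_origin[of A B C]
    by (simp_all add: ccw_iff_area2_pos F2_def F3_def u_def v_def)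
  moreover have "weitzenboeck_gap A F2 F3 = weitzenboeck_gap A B C"
    using weitzenboeck_gap_eq_origin[of A F2 F3] weitzenboeck_gap_eq_origin[of A B C]
    by (simp add: weitzenboeck_gap_flank_origin F2_def F3_def u_def v_def)
  moreover have "x16_offset A F2 F3 = x16_offset 0 (rho * v) (inverse rho * u)"
      "x16_offset A B C = x16_offset 0 u v"
    using x16_offset_eq_origin[of A F2 F3] x16_offset_eq_origin[of A B C]
    by (simp_all add: F2_def F3_def u_def v_def)
  moreover have "flank_a A B C = (A, F2, F3)"
    by (simp add: flank_a_def F2_def F3_def u_def v_def)
  ultimately show ?thesis
    by (simp add: X16_eq_offset[OF ccw_flank] X16_eq_offset[OF assms(1)] x16_offset_flank_origin)
qed

theorem mainTheorem2:
  fixes A B C :: complex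
  assumes "ccw A B C"
    and "tri_angle A B C < 2 * pi / 3"
    and "tri_angle B C A < 2 * pi / 3"
    and "tri_angle C A B < 2 * pi / 3"
  shows "X16 (flank_a A B C) = X16 (A, B, C)
       \<and> X16 (flank_b A B C) = X16 (A, B, C)
       \<and> X16 (flank_c A B C) = X16 (A, B, C)"
proof -
  have ccw_BCA: "ccw B C A" and ccw_CAB: "ccw C A B"
    using assms(1) ccw_rotate by blast+
  have "flank_b A B C = flank_a B C A" "flank_c A B C = flank_a C A B"
    by (simp_all add: flank_a_def flank_b_def flank_c_def)
  moreover have "X16 (B, C, A) = X16 (A, B, C)" "X16 (C, A, B) = X16 (A, B, C)"
    using X16_rotate[OF assms(1)] X16_rotate[OF ccw_BCA] by simp_all
  ultimately show ?thesis
    using X16_flank_a assms ccw_BCA ccw_CAB by simp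
qed

end
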